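(* Let $n>k\geq1$, $r=n-k$, and for $i\in[m]$ let $1\leq h_i\leq n-k$ and $k\leq d_i\leq n-h_i$ be integers. Put $\delta_i=\gcd(h_i,d_i-k)$ and $s_i=\frac{d_i-k+\delta_i}{\delta_i}$, with the pairs indexed so that $s_1\leq s_2\leq\cdots\leq s_m$; let $s=\mathrm{lcm}\big(\frac{d_1-k+h_1}{\delta_1},\ldots,\frac{d_m-k+h_m}{\delta_m}\big)$ and $\ell=s\cdot s_m^n$. Let $F$ be a finite field with $|F|\geq s_mn$ and $\lambda_{i,j}$, $i\in[n]$, $j\in[0,s_m-1]$, be $s_mn$ distinct elements of $F$. Let $\mathcal{C}_4$ be the set of all $(\bm c_1,\ldots,\bm c_n)$, $\bm c_i=(c_{i,0},\ldots,c_{i,\ell-1})\in F^\ell$, satisfying $$\sum_{i=1}^n \lambda_{i,a_i}^{t-1} c_{i,(a,b)}=0\quad\text{for all } a\in[0,s_m^n-1],\ b\in[0,s-1],\ t\in[r].$$ Then $\mathcal{C}_4$ is an $(n,k,\ell)$ MDS array code having the $(h_i,d_i)$-optimal repair property for all $i\in[m]$.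
   Context: Notation: $[n]=\{1,\ldots,n\}$, $[i,j]=\{i,\ldots,j\}$. Each $\tau\in[0,\ell-1]$ is written uniquely as $\tau=b\cdot s_m^n+\sum_{i=1}^n a_i s_m^{i-1}$ with $b\in[0,s-1]$, $a_i\in[0,s_m-1]$; we write $a=(a_1,\ldots,a_n)$ and $\tau=(a,b)$, with $c_{i,(a,b)}=c_{i,\tau}$. An $(n,k,\ell)$ MDS array code over $F$ is an $F$-linear set of vectors $(\bm c_1,\ldots,\bm c_n)$, $\bm c_i\in F^\ell$ (node $i$ stores $\bm c_i$), of dimension $k\ell$, such that any $k$ coordinates determine the codeword. The $(h,d)$-optimal repair property means: for every $h$-subset $\mathcal{H}\subseteq[n]$ and every $d$-subset $\mathcal{R}\subseteq[n]\setminus\mathcal{H}$, each helper $j\in\mathcal{R}$ can send $\beta=\frac{h\ell}{d-k+h}$ symbols of $F$ computed from $\bm c_j$ such that from these $\frac{dh\ell}{d-k+h}$ symbols in total all $\bm c_i$, $i\in\mathcal{H}$, are determined, for every codeword (equality in the cut-set bound). *)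

theory Defs
  imports Complex_Main "HOL-Library.Function_Algebras" "HOL-Library.Cardinality"
begin

text \<open>A codeword (c_1,...,c_n), c_i in F^l, is represented as c :: nat => nat => 'a,
  where c i tau = c_{i,tau} for i in {1..n}, tau < l, and c i tau = 0 otherwise.\<close>

definition cw_scale :: "'a::field \<Rightarrow> (nat \<Rightarrow> nat \<Rightarrow> 'a) \<Rightarrow> (nat \<Rightarrow> nat \<Rightarrow> 'a)" where
  "cw_scale x c = (\<lambda>i tau. x * c i tau)"

definition is_MDS_array_code ::
  "nat \<Rightarrow> nat \<Rightarrow> nat \<Rightarrow> (nat \<Rightarrow> nat \<Rightarrow> 'a::field) set \<Rightarrow> bool" where
  "is_MDS_array_code n k l C \<longleftrightarrow>
     (\<forall>c\<in>C. \<forall>i tau. (i \<notin> {1..n} \<or> l \<le> tau) \<longrightarrow> c i tau = 0) \<and>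
     module.subspace cw_scale C \<and>
     vector_space.dim cw_scale C = k * l \<and>
     (\<forall>K. K \<subseteq> {1..n} \<and> card K = k \<longrightarrow>
        (\<forall>c\<in>C. \<forall>c'\<in>C. (\<forall>i\<in>K. c i = c' i) \<longrightarrow> c = c'))"

text \<open>(h,d)-optimal repair property: every helper j in R sends
  beta = h l / (d-k+h) symbols of F computed from c_j (a function f j of c_j),
  and these symbols determine all c_i, i in H, for every codeword.\<close>
definition has_optimal_repair ::
  "nat \<Rightarrow> nat \<Rightarrow> nat \<Rightarrow> (nat \<Rightarrow> nat \<Rightarrow> 'a::field) set \<Rightarrow> nat \<Rightarrow> nat \<Rightarrow> bool" where
  "has_optimal_repair n k l C h d \<longleftrightarrow>
     (d - k + h) dvd (h * l) \<and>
     (\<forall>H R. H \<subseteq> {1..n} \<and> card H = h \<and> R \<subseteq> {1..n} - H \<and> card R = d \<longrightarrow>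
        (\<exists>f :: nat \<Rightarrow> (nat \<Rightarrow> 'a) \<Rightarrow> 'a list.
            (\<forall>j\<in>R. \<forall>v. length (f j v) = h * l div (d - k + h)) \<and>
            (\<forall>c\<in>C. \<forall>c'\<in>C. (\<forall>j\<in>R. f j (c j) = f j (c' j)) \<longrightarrow> (\<forall>i\<in>H. c i = c' i))))"

text \<open>Digit a_i of tau in [0, s_m^n * s - 1]: tau = b s_m^n + sum_i a_i s_m^(i-1).\<close>
definition digit :: "nat \<Rightarrow> nat \<Rightarrow> nat \<Rightarrow> nat" where
  "digit sm i tau = tau div sm ^ (i - 1) mod sm"

end

theory Submission
  imports Defs "HOL-Computational_Algebra.Polynomial" "HOL-Library.FuncSet" "HOL-Number_Theory.Cong"
begin

text \<open>
  At a fixed position tau the r = n - k parity checks form a Vandermonde system in the points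
  lam i (a_i), which are distinct for distinct nodes. A vector whose first r power sums vanish
  is zero, and over a finite field a square Vandermonde system is solvable; hence any k nodes
  determine the codeword while the first k nodes can be prescribed freely, so the dimension is k l.

  To repair h = q delta nodes H from d = k + p delta helpers, where delta = gcd h (d - k), split H
  into q blocks of at most delta nodes and group the positions into lines of p + 1 positions
  along which only the digits of one block move, each through p + 1 values. Every helper sends
  the sum of its symbols over each of the h l / (d - k + h) lines. Summing the parity checks over
  a line and removing the helper contributions leaves a Vandermonde system in at most
  (n - d) + p delta = r distinct points; it yields the symbols of the moving block on the line
  and the line sums of the other failed nodes, and these two together recover all of H.
\<close>

lemma power_sums_vanish_imp_zero:
  fixes Z :: "'a::field set" and W :: "'a \<Rightarrow> 'a"
  assumes fin: "finite Z" and card: "card Z \<le> r"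
    and sums: "\<forall>t<r. (\<Sum>z\<in>Z. z ^ t * W z) = 0" and z0: "z0 \<in> Z"
  shows "W z0 = 0"
proof -
  define Q where "Q = (\<Prod>z\<in>Z - {z0}. [:- z, 1:])"
  have "degree Q \<le> card (Z - {z0})"
    unfolding Q_def using degree_prod_sum_le[of "Z - {z0}" "\<lambda>z. [:- z, 1:]"] fin by simp
  also have "\<dots> < r" using card z0 fin by (metis card_Diff1_less le_trans not_less)
  finally have deg: "degree Q < r" .
  have "0 = (\<Sum>i\<le>degree Q. coeff Q i * (\<Sum>z\<in>Z. z ^ i * W z))"
    using sums deg by simp
  also have "\<dots> = (\<Sum>z\<in>Z. poly Q z * W z)"
    by (simp add: poly_altdef sum_distrib_left sum_distrib_right mult.assoc) (rule sum.swap)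
  also have "\<dots> = poly Q z0 * W z0 + (\<Sum>z\<in>Z - {z0}. poly Q z * W z)"
    using fin z0 by (simp add: sum.remove)
  also have "(\<Sum>z\<in>Z - {z0}. poly Q z * W z) = 0"
    using fin by (intro sum.neutral) (auto simp: Q_def poly_prod)
  finally have "poly Q z0 * W z0 = 0" by simp
  moreover have "poly Q z0 \<noteq> 0" using fin by (simp add: Q_def poly_prod)
  ultimately show ?thesis by simp
qed

lemma power_sums_vanish_imp_fibre_sums_zero:
  fixes pt :: "'b \<Rightarrow> 'a::field" and w :: "'b \<Rightarrow> 'a"
  assumes fin: "finite X" and card: "card (pt ` X) \<le> r"
    and sums: "\<forall>t<r. (\<Sum>x\<in>X. pt x ^ t * w x) = 0"
  shows "(\<Sum>x\<in>{x\<in>X. pt x = z}. w x) = 0"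
proof (cases "z \<in> pt ` X")
  case True
  define W where "W y = (\<Sum>x\<in>{x\<in>X. pt x = y}. w x)" for y
  have "(\<Sum>y\<in>pt ` X. y ^ t * W y) = (\<Sum>x\<in>X. pt x ^ t * w x)" for t
  proof -
    have "(\<Sum>y\<in>pt ` X. y ^ t * W y) = (\<Sum>y\<in>pt ` X. \<Sum>x\<in>{x\<in>X. pt x = y}. pt x ^ t * w x)"
      unfolding W_def sum_distrib_left by (intro sum.cong refl) auto
    then show ?thesis using sum.image_gen[OF fin, of "\<lambda>x. pt x ^ t * w x" pt] by simp
  qed
  then have "W z = 0"
    using power_sums_vanish_imp_zero[of "pt ` X" r W z] fin card sums True by simp
  then show ?thesis by (simp add: W_def)
qed (auto intro: sum.neutral)

lemma power_sums_vanish_imp_zero_at_isolated: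
  fixes pt :: "'b \<Rightarrow> 'a::field" and w :: "'b \<Rightarrow> 'a"
  assumes "finite X" and "card (pt ` X) \<le> r"
    and "\<forall>t<r. (\<Sum>x\<in>X. pt x ^ t * w x) = 0"
    and "x0 \<in> X" and "\<forall>x\<in>X. pt x = pt x0 \<longrightarrow> x = x0"
  shows "w x0 = 0"
proof -
  have "{x\<in>X. pt x = pt x0} = {x0}" using assms(4,5) by auto
  then show ?thesis using power_sums_vanish_imp_fibre_sums_zero[OF assms(1-3), of "pt x0"] by simp
qed

text \<open>Over a finite field the square Vandermonde map is injective, hence surjective by counting.\<close>

lemma ex_power_sums_eq:
  fixes pt :: "'b \<Rightarrow> 'a::{field,finite}"
  assumes fin: "finite J" and card: "card J = r" and inj: "inj_on pt J"
  shows "\<exists>w. \<forall>t<r. (\<Sum>j\<in>J. pt j ^ t * w j) = y t"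
proof -
  define Phi where "Phi w = restrict (\<lambda>t. \<Sum>j\<in>J. pt j ^ t * w j) {..<r}" for w :: "'b \<Rightarrow> 'a"
  define Dom where "Dom = J \<rightarrow>\<^sub>E (UNIV :: 'a set)"
  define Tgt where "Tgt = {..<r} \<rightarrow>\<^sub>E (UNIV :: 'a set)"
  have "inj_on Phi Dom"
  proof (rule inj_onI)
    fix w1 w2 assume w1: "w1 \<in> Dom" and w2: "w2 \<in> Dom" and eq: "Phi w1 = Phi w2"
    have sums: "\<forall>t<r. (\<Sum>j\<in>J. pt j ^ t * (w1 j - w2 j)) = 0"
    proof (intro allI impI)
      fix t assume "t < r"
      then have "(\<Sum>j\<in>J. pt j ^ t * w1 j) = (\<Sum>j\<in>J. pt j ^ t * w2 j)"
        using fun_cong[OF eq, of t] by (simp add: Phi_def)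
      then show "(\<Sum>j\<in>J. pt j ^ t * (w1 j - w2 j)) = 0"
        by (simp add: right_diff_distrib sum_subtractf)
    qed
    have "w1 j = w2 j" if "j \<in> J" for j
      using power_sums_vanish_imp_zero_at_isolated[OF fin _ sums that] inj that card
        card_image_le[OF fin, of pt] by (auto dest: inj_onD)
    with w1 w2 show "w1 = w2"
      unfolding Dom_def by (intro extensionalityI[of _ J]) (auto simp: PiE_iff)
  qed
  then have "card (Phi ` Dom) = card Tgt"
    using fin card by (simp add: card_image Dom_def Tgt_def card_PiE)
  moreover have "Phi ` Dom \<subseteq> Tgt"
    unfolding Phi_def Tgt_def by (intro image_subsetI) (simp add: restrict_PiE_iff)
  moreover have "finite Tgt" by (simp add: Tgt_def finite_PiE)
  ultimately have "Phi ` Dom = Tgt" by (intro card_subset_eq)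
  moreover have "restrict y {..<r} \<in> Tgt" by (simp add: Tgt_def)
  ultimately obtain w where "restrict y {..<r} = Phi w" by auto
  then have "\<forall>t<r. (\<Sum>j\<in>J. pt j ^ t * w j) = y t"
    by (auto simp: Phi_def fun_eq_iff split: if_splits)
  then show ?thesis by blast
qed

lemma digit_less: "0 < sm \<Longrightarrow> digit sm i t < sm"
  by (simp add: digit_def)

lemma mod_power_eq_if_digits_eq:
  "\<forall>i\<in>{1..n}. digit sm i x = digit sm i y \<Longrightarrow> x mod sm ^ n = y mod sm ^ n"
proof (induction n)
  case (Suc n)
  then have low: "x mod sm ^ n = y mod sm ^ n" by auto
  have top: "x div sm ^ n mod sm = y div sm ^ n mod sm"
    using Suc.prems by (auto simp: digit_def dest: bspec[of _ _ "Suc n"])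
  show ?case
    unfolding power_Suc2 mod_mult2_eq using low top by simp
qed simp

lemma digit_mod_power:
  assumes "i \<in> {1..n}" shows "digit sm i (x mod sm ^ n) = digit sm i x"
proof -
  have "n = (i - 1) + (n - i + 1)" using assms by auto
  then have n: "sm ^ n = sm ^ (i - 1) * sm ^ (n - i + 1)" by (metis power_add)
  have "x mod sm ^ n div sm ^ (i - 1) = x div sm ^ (i - 1) mod sm ^ (n - i + 1)"
    unfolding n by (cases "sm = 0") (auto simp: mod_mult2_eq)
  moreover have "sm dvd sm ^ (n - i + 1)" by simp
  ultimately show ?thesis by (simp add: digit_def mod_mod_cancel)
qed

lemma ex_digits:
  assumes "0 < sm" and "\<forall>i\<in>{1..n}. a i < sm"
  shows "\<exists>Y<sm ^ n. \<forall>i\<in>{1..n}. digit sm i Y = a i"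
  using assms(2)
proof (induction n)
  case (Suc n)
  then obtain Y where Y: "Y < sm ^ n" "\<forall>i\<in>{1..n}. digit sm i Y = a i" by auto
  have top: "a (Suc n) < sm" using Suc.prems by auto
  define Y' where "Y' = Y + sm ^ n * a (Suc n)"
  have "Y' < sm ^ n * (a (Suc n) + 1)" using Y by (simp add: Y'_def)
  also have "\<dots> \<le> sm ^ n * sm" using top by (intro mult_le_mono2) simp
  finally have less: "Y' < sm ^ Suc n" by (simp add: mult.commute)
  have "digit sm i Y' = a i" if "i \<in> {1..Suc n}" for i
  proof (cases "i = Suc n")
    case True
    then show ?thesis using Y top assms(1) by (simp add: digit_def Y'_def)
  next
    case False
    then have "i \<in> {1..n}" using that by auto
    then show ?thesis using digit_mod_power[of i n sm Y'] Y by (simp add: Y'_def)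
  qed
  then show ?case using less by blast
qed simp

lemma eq_if_div_mod_digits_eq:
  fixes x y :: nat
  assumes "x div (P * sm ^ n) = y div (P * sm ^ n)" and "x div sm ^ n mod P = y div sm ^ n mod P"
    and "\<forall>i\<in>{1..n}. digit sm i x = digit sm i y"
  shows "x = y"
proof -
  have "x div sm ^ n = y div sm ^ n"
    using assms(1,2) by (metis div_mult2_eq div_mult_mod_eq mult.commute)
  moreover have "x mod sm ^ n = y mod sm ^ n" using mod_power_eq_if_digits_eq assms(3) by blast
  ultimately show ?thesis by (metis div_mult_mod_eq)
qed

lemma digit_point_eqD:
  fixes lam :: "nat \<Rightarrow> nat \<Rightarrow> 'a"
  assumes "inj_on (\<lambda>(i, j). lam i j) ({1..n} \<times> {0..<sm})" and "0 < sm"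
    and "i \<in> {1..n}" and "i' \<in> {1..n}" and "lam i (digit sm i x) = lam i' (digit sm i' y)"
  shows "i = i' \<and> digit sm i x = digit sm i' y"
  using inj_onD[OF assms(1), of "(i, digit sm i x)" "(i', digit sm i' y)"] assms(2-5)
  by (auto simp: digit_less)

definition vandermonde_array_code ::
  "nat \<Rightarrow> nat \<Rightarrow> nat \<Rightarrow> nat \<Rightarrow> (nat \<Rightarrow> nat \<Rightarrow> 'a) \<Rightarrow> (nat \<Rightarrow> nat \<Rightarrow> 'a::field) set" where
  "vandermonde_array_code n r sm l lam = {c.
     (\<forall>i tau. (i \<notin> {1..n} \<or> l \<le> tau) \<longrightarrow> c i tau = 0) \<and>
     (\<forall>tau<l. \<forall>t\<in>{1..r}. (\<Sum>i=1..n. lam i (digit sm i tau) ^ (t - 1) * c i tau) = 0)}"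

lemma vandermonde_array_code_vanishes:
  "c \<in> vandermonde_array_code n r sm l lam \<Longrightarrow> i \<notin> {1..n} \<or> l \<le> tau \<Longrightarrow> c i tau = 0"
  by (simp add: vandermonde_array_code_def)

lemma vandermonde_array_code_parity:
  assumes "c \<in> vandermonde_array_code n r sm l lam" and "tau < l" and "t < r"
  shows "(\<Sum>i=1..n. lam i (digit sm i tau) ^ t * c i tau) = 0"
proof -
  have "Suc t \<in> {1..r}" using assms(3) by simp
  then show ?thesis using assms(1,2) unfolding vandermonde_array_code_def by fastforce
qed

lemma vandermonde_array_code_diff:
  "c \<in> vandermonde_array_code n r sm l lam \<Longrightarrow> c' \<in> vandermonde_array_code n r sm l lam \<Longrightarrow>
    c - c' \<in> vandermonde_array_code n r sm l lam"
  by (simp add: vandermonde_array_code_def right_diff_distrib sum_subtractf)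

lemma vector_space_cw_scale: "vector_space (cw_scale :: 'a::field \<Rightarrow> _)"
  by unfold_locales (auto simp: cw_scale_def fun_eq_iff algebra_simps)

lemma subspace_vandermonde_array_code:
  "module.subspace cw_scale (vandermonde_array_code n r sm l lam)"
proof -
  interpret V: vector_space "cw_scale :: 'a \<Rightarrow> _" by (rule vector_space_cw_scale)
  have "(\<Sum>i=1..n. lam i (digit sm i tau) ^ (t - 1) * (a * c i tau))
      = a * (\<Sum>i=1..n. lam i (digit sm i tau) ^ (t - 1) * c i tau)" for a :: 'a and c tau t
    by (simp add: sum_distrib_left mult.left_commute)
  then show ?thesis
    unfolding V.subspace_def
    by (auto simp: vandermonde_array_code_def cw_scale_def distrib_left sum.distrib)
qed

lemma vandermonde_array_code_eq_zero:
  fixes lam :: "nat \<Rightarrow> nat \<Rightarrow> 'a::field"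
  assumes e: "e \<in> vandermonde_array_code n r sm l lam" and sm: "0 < sm"
    and inj: "inj_on (\<lambda>(i, j). lam i j) ({1..n} \<times> {0..<sm})"
    and K: "K \<subseteq> {1..n}" "n - r \<le> card K" and zero: "\<forall>i\<in>K. e i = 0"
  shows "e = 0"
proof -
  have "e i tau = 0" for i tau
  proof (cases "i \<in> {1..n} - K \<and> tau < l")
    case True
    define X where "X = {1..n} - K"
    define pt where "pt j = lam j (digit sm j tau)" for j
    have "card X \<le> r" using K by (simp add: X_def card_Diff_subset finite_subset)
    then have card: "card (pt ` X) \<le> r" using card_image_le[of X pt] by (simp add: X_def)
    have "(\<Sum>j\<in>X. pt j ^ t * e j tau) = (\<Sum>j=1..n. lam j (digit sm j tau) ^ t * e j tau)" for t
      unfolding X_def pt_def using zero K by (intro sum.mono_neutral_left) auto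
    then have "\<forall>t<r. (\<Sum>j\<in>X. pt j ^ t * e j tau) = 0"
      using vandermonde_array_code_parity[OF e] True by simp
    moreover have "\<forall>j\<in>X. pt j = pt i \<longrightarrow> j = i"
      using digit_point_eqD[OF inj sm] True by (auto simp: X_def pt_def)
    ultimately show ?thesis
      using power_sums_vanish_imp_zero_at_isolated[of X pt r "\<lambda>j. e j tau" i] card True
      by (simp add: X_def)
  next
    case False
    then show ?thesis using vandermonde_array_code_vanishes[OF e, of i tau] zero by auto
  qed
  then show ?thesis by (simp add: fun_eq_iff)
qed

lemma ex_unit_vandermonde_codeword:
  fixes lam :: "nat \<Rightarrow> nat \<Rightarrow> 'a::{field,finite}"
  assumes sm: "0 < sm" and inj: "inj_on (\<lambda>(i, j). lam i j) ({1..n} \<times> {0..<sm})"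
    and r: "r = n - k" and k: "k \<le> n" and i0: "i0 \<in> {1..k}" and t0: "t0 < l"
  shows "\<exists>c\<in>vandermonde_array_code n r sm l lam.
           \<forall>(i, tau)\<in>{1..k} \<times> {..<l}. c i tau = (if (i, tau) = (i0, t0) then 1 else 0)"
proof -
  define J where "J = {k+1..n}"
  define pt where "pt j = lam j (digit sm j t0)" for j
  have "inj_on pt J"
    using digit_point_eqD[OF inj sm] by (auto simp: inj_on_def J_def pt_def)
  then obtain w where w: "\<forall>t<r. (\<Sum>j\<in>J. pt j ^ t * w j) = - (pt i0 ^ t)"
    using ex_power_sums_eq[of J r pt "\<lambda>t. - (pt i0 ^ t)"] r by (auto simp: J_def)
  define c where "c i tau = (if tau = t0 then (if i = i0 then 1 else if i \<in> J then w i else 0) else 0)"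
    for i tau
  have parity: "(\<Sum>i=1..n. pt i ^ t * c i t0) = 0" if "t < r" for t
  proof -
    have split: "{1..n} = {1..k} \<union> J" "{1..k} \<inter> J = {}" using k by (auto simp: J_def)
    have "(\<Sum>i\<in>{1..k}. pt i ^ t * c i t0) = pt i0 ^ t"
      using i0 by (simp add: c_def J_def if_distrib[of "\<lambda>x. _ * x"] cong: if_cong)
    moreover have "(\<Sum>i\<in>J. pt i ^ t * c i t0) = - (pt i0 ^ t)"
      using w that i0 by (simp add: c_def J_def)
    ultimately show ?thesis unfolding split(1) by (simp add: sum.union_disjoint split(2) J_def)
  qed
  have "c \<in> vandermonde_array_code n r sm l lam"
    unfolding vandermonde_array_code_def
  proof (intro CollectI conjI allI impI ballI)
    fix i tau assume "i \<notin> {1..n} \<or> l \<le> tau"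
    then show "c i tau = 0" using t0 i0 k by (auto simp: c_def J_def)
  next
    fix tau t assume "tau < l" "t \<in> {1..r}"
    then show "(\<Sum>i=1..n. lam i (digit sm i tau) ^ (t - 1) * c i tau) = 0"
      using parity[of "t - 1"] by (cases "tau = t0") (auto simp: c_def pt_def)
  qed
  moreover have "\<forall>(i, tau)\<in>{1..k} \<times> {..<l}. c i tau = (if (i, tau) = (i0, t0) then 1 else 0)"
    by (auto simp: c_def J_def)
  ultimately show ?thesis by blast
qed

lemma sum_cw_scale_apply: "(\<Sum>p\<in>A. cw_scale (f p) (g p)) i t = (\<Sum>p\<in>A. f p * g p i t)"
  by (induct A rule: infinite_finite_induct) (auto simp: cw_scale_def)

lemma sum_mult_coordinate_units:
  assumes units: "\<And>p i t. p \<in> I \<Longrightarrow> (i, t) \<in> I \<Longrightarrow> E p i t = (if (i, t) = p then 1 else 0)"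
    and "finite I" and "(i, t) \<in> I"
  shows "(\<Sum>p\<in>I. f p * E p i t) = (f (i, t) :: 'a::semiring_1)"
proof -
  have "(\<Sum>p\<in>I. f p * E p i t) = (\<Sum>p\<in>I. if p = (i, t) then f p else 0)"
    using units assms(3) by (intro sum.cong) auto
  then show ?thesis using assms(2,3) by simp
qed

lemma inj_on_coordinate_units:
  assumes units: "\<And>p i t. p \<in> I \<Longrightarrow> (i, t) \<in> I \<Longrightarrow> E p i t = (if (i, t) = p then 1 else (0::'a::zero_neq_one))"
  shows "inj_on E I"
proof (rule inj_onI)
  fix p p' assume p: "p \<in> I" and p': "p' \<in> I" and eq: "E p = E p'"
  have "E p (fst p') (snd p') = 1" using units[of p' "fst p'" "snd p'"] p' eq by simp
  then show "p = p'" using units[OF p, of "fst p'" "snd p'"] p' by (simp split: if_splits)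
qed

lemma independent_coordinate_units:
  fixes E :: "nat \<times> nat \<Rightarrow> nat \<Rightarrow> nat \<Rightarrow> 'a::field"
  assumes units: "\<And>p i t. p \<in> I \<Longrightarrow> (i, t) \<in> I \<Longrightarrow> E p i t = (if (i, t) = p then 1 else 0)"
    and I: "finite I"
  shows "\<not> module.dependent cw_scale (E ` I)"
proof -
  interpret V: vector_space "cw_scale :: 'a \<Rightarrow> _" by (rule vector_space_cw_scale)
  show ?thesis
  proof (rule V.independent_if_scalars_zero)
    fix f x assume sum: "(\<Sum>x\<in>E ` I. cw_scale (f x) x) = 0" and "x \<in> E ` I"
    then obtain i t where p: "(i, t) \<in> I" "x = E (i, t)" by auto
    have "(\<Sum>p\<in>I. cw_scale (f (E p)) (E p)) = 0"
      using sum by (simp add: sum.reindex[OF inj_on_coordinate_units[OF units]])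
    then have "(\<Sum>p\<in>I. f (E p) * E p i t) = 0"
      using sum_cw_scale_apply[of "\<lambda>p. f (E p)" E I i t] by simp
    then show "f x = 0" using sum_mult_coordinate_units[OF units I p(1)] p by simp
  qed (use I in simp)
qed

lemma dim_eq_card_if_coordinates_free:
  fixes C :: "(nat \<Rightarrow> nat \<Rightarrow> 'a::field) set" and I :: "(nat \<times> nat) set"
  assumes C: "module.subspace cw_scale C" and I: "finite I"
    and determined: "\<And>c. c \<in> C \<Longrightarrow> \<forall>(i, t)\<in>I. c i t = 0 \<Longrightarrow> c = 0"
    and free: "\<forall>p\<in>I. \<exists>e\<in>C. \<forall>(i, t)\<in>I. e i t = (if (i, t) = p then 1 else 0)"
  shows "vector_space.dim cw_scale C = card I"
proof -
  interpret V: vector_space "cw_scale :: 'a \<Rightarrow> _" by (rule vector_space_cw_scale)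
  from bchoice[OF free[unfolded Bex_def]] obtain E
    where E: "\<forall>p\<in>I. E p \<in> C \<and> (\<forall>(i, t)\<in>I. E p i t = (if (i, t) = p then 1 else 0))" by blast
  then have units: "E p i t = (if (i, t) = p then 1 else 0)" if "p \<in> I" "(i, t) \<in> I" for p i t
    using that by blast
  have "C \<subseteq> V.span (E ` I)"
  proof
    fix c assume c: "c \<in> C"
    define c' where "c' = (\<Sum>p\<in>I. cw_scale (c (fst p) (snd p)) (E p))"
    have "c' \<in> V.span (E ` I)"
      unfolding c'_def by (intro V.span_sum V.span_scale V.span_base) auto
    moreover have "c - c' \<in> C"
      unfolding c'_def using C c E by (intro V.subspace_diff V.subspace_sum V.subspace_scale) auto
    moreover have "(c - c') i t = 0" if "(i, t) \<in> I" for i t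
      using sum_mult_coordinate_units[OF units I that, of "\<lambda>p. c (fst p) (snd p)"]
      by (simp add: c'_def sum_cw_scale_apply)
    ultimately have "c - c' = 0" by (intro determined) auto
    then show "c \<in> V.span (E ` I)" using \<open>c' \<in> V.span (E ` I)\<close> by simp
  qed
  moreover have "E ` I \<subseteq> C" using E by auto
  ultimately show ?thesis
    using V.dim_unique[OF _ _ independent_coordinate_units[OF units I]]
      card_image[OF inj_on_coordinate_units[OF units]] by simp
qed

lemma is_MDS_vandermonde_array_code:
  fixes lam :: "nat \<Rightarrow> nat \<Rightarrow> 'a::{field,finite}"
  assumes sm: "0 < sm" and inj: "inj_on (\<lambda>(i, j). lam i j) ({1..n} \<times> {0..<sm})"
    and k: "k \<le> n" and r: "r = n - k"
  shows "is_MDS_array_code n k l (vandermonde_array_code n r sm l lam)"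
proof -
  let ?C = "vandermonde_array_code n r sm l lam"
  have determined: "c = c'" if "K \<subseteq> {1..n}" "card K = k" "c \<in> ?C" "c' \<in> ?C" "\<forall>i\<in>K. c i = c' i"
    for K c c'
  proof -
    have "c - c' = 0"
      by (rule vandermonde_array_code_eq_zero[OF vandermonde_array_code_diff[OF that(3,4)] sm inj that(1)])
        (use that r in auto)
    then show ?thesis by simp
  qed
  have "vector_space.dim cw_scale ?C = card ({1..k} \<times> {..<l})"
  proof (rule dim_eq_card_if_coordinates_free[OF subspace_vandermonde_array_code])
    fix c assume c: "c \<in> ?C" and "\<forall>(i, t)\<in>{1..k} \<times> {..<l}. c i t = 0"
    then have "\<forall>i\<in>{1..k}. c i = 0"
      using vandermonde_array_code_vanishes[OF c] by (force simp: fun_eq_iff not_less)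
    then show "c = 0" using vandermonde_array_code_eq_zero[OF c sm inj, of "{1..k}"] k r by simp
  next
    show "\<forall>p\<in>{1..k} \<times> {..<l}. \<exists>e\<in>?C. \<forall>(i, t)\<in>{1..k} \<times> {..<l}. e i t = (if (i, t) = p then 1 else 0)"
      using ex_unit_vandermonde_codeword[OF sm inj r k] by auto
  qed simp
  then show ?thesis
    unfolding is_MDS_array_code_def
  proof (intro conjI allI ballI impI)
    fix c i tau assume "c \<in> ?C" "i \<notin> {1..n} \<or> l \<le> tau"
    then show "c i tau = 0" by (rule vandermonde_array_code_vanishes)
  qed (use subspace_vandermonde_array_code determined in auto)
qed

lemma mixed_radix_index:
  fixes u g Y :: nat
  assumes u: "u < q" and g: "g < s" and Y: "Y < N"
  shows "(u * s + g) * N + Y < q * s * N" and "((u * s + g) * N + Y) div (s * N) = u"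
    and "((u * s + g) * N + Y) div N mod s = g" and "((u * s + g) * N + Y) mod N = Y"
proof -
  have "(u * s + g) * N + Y < (u * s + g + 1) * N" using Y by simp
  also have "\<dots> \<le> q * s * N"
  proof (rule mult_le_mono1)
    have "u * s + g + 1 \<le> (u + 1) * s" using g by simp
    also have "\<dots> \<le> q * s" using u by (intro mult_le_mono1) simp
    finally show "u * s + g + 1 \<le> q * s" .
  qed
  finally show "(u * s + g) * N + Y < q * s * N" .
  have div: "((u * s + g) * N + Y) div N = u * s + g" using Y by simp
  then show "((u * s + g) * N + Y) div (s * N) = u"
    using g by (simp add: div_mult2_eq mult.commute)
  show "((u * s + g) * N + Y) div N mod s = g" using div g by simp
  show "((u * s + g) * N + Y) mod N = Y" using Y by simp
qed

locale repair_setting =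
  fixes n k r sm l :: nat and lam :: "nat \<Rightarrow> nat \<Rightarrow> 'a::field"
    and d \<delta> p q P s2 :: nat and H R :: "nat set" and blk :: "nat \<Rightarrow> nat"
  assumes sm_pos: "0 < sm"
    and lam_inj: "inj_on (\<lambda>(i, j). lam i j) ({1..n} \<times> {0..<sm})"
    and r: "r = n - k" and kd: "k \<le> d" and dn: "d \<le> n" and dk: "d - k = p * \<delta>"
    and P: "P = p + q" and p_less: "p < sm" and q_pos: "0 < q" and l: "l = P * s2 * sm ^ n"
    and H: "H \<subseteq> {1..n}" and R: "R \<subseteq> {1..n} - H" and card_R: "card R = d"
    and blk_less: "\<forall>i\<in>H. blk i < q"
    and card_block: "\<forall>u. card {i\<in>H. blk i = u} \<le> \<delta>"
begin

definition line_shift :: "nat \<Rightarrow> nat" where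
  "line_shift tau = (if tau div sm ^ n mod P < p then tau div sm ^ n mod P + 1 else 0)"

text \<open>A position tau = (a, b) is split further as b = P g + rho. The line (u, g, Y) consists of
  the position with rho = p + u and digits Y, and of the p positions with rho < p whose digits
  are those of Y, shifted by rho + 1 on the nodes of block u.\<close>

definition line :: "nat \<Rightarrow> nat \<Rightarrow> nat \<Rightarrow> nat set" where
  "line u g Y = {tau. tau < l \<and> tau div (P * sm ^ n) = g \<and>
     (tau div sm ^ n mod P < p \<or> tau div sm ^ n mod P = p + u) \<and>
     (\<forall>i\<in>{1..n}. digit sm i tau =
        (if i \<in> H \<and> blk i = u then (digit sm i Y + line_shift tau) mod sm else digit sm i Y))}"

definition point :: "nat \<times> nat \<Rightarrow> 'a" where
  "point = (\<lambda>(i, tau). lam i (digit sm i tau))"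

lemma point_apply [simp]: "point (i, tau) = lam i (digit sm i tau)"
  by (simp add: point_def)

lemma line_shift_le: "line_shift tau \<le> p"
  by (simp add: line_shift_def)

lemma line_less: "tau \<in> line u g Y \<Longrightarrow> tau < l"
  by (simp add: line_def)

lemma finite_line: "finite (line u g Y)"
  by (rule finite_subset[of _ "{..<l}"]) (auto dest: line_less)

lemma digit_line_block:
  "tau \<in> line u g Y \<Longrightarrow> i \<in> {1..n} \<Longrightarrow> i \<in> H \<Longrightarrow> blk i = u \<Longrightarrow>
    digit sm i tau = (digit sm i Y + line_shift tau) mod sm"
  by (simp add: line_def)

lemma digit_line_other:
  "tau \<in> line u g Y \<Longrightarrow> i \<in> {1..n} \<Longrightarrow> \<not> (i \<in> H \<and> blk i = u) \<Longrightarrow> digit sm i tau = digit sm i Y"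
  by (auto simp: line_def)

lemma line_eq_if_shift_eq:
  assumes t1: "t1 \<in> line u g Y" and t2: "t2 \<in> line u g Y" and eq: "line_shift t1 = line_shift t2"
  shows "t1 = t2"
proof (rule eq_if_div_mod_digits_eq)
  show "t1 div (P * sm ^ n) = t2 div (P * sm ^ n)" using t1 t2 by (simp add: line_def)
  show "t1 div sm ^ n mod P = t2 div sm ^ n mod P"
    using t1 t2 eq by (auto simp: line_def line_shift_def split: if_splits)
  show "\<forall>i\<in>{1..n}. digit sm i t1 = digit sm i t2"
    using t1 t2 eq by (simp add: line_def)
qed

lemma line_eq_if_block_digit_eq:
  assumes t1: "t1 \<in> line u g Y" and t2: "t2 \<in> line u g Y"
    and i: "i \<in> {1..n}" "i \<in> H" "blk i = u" and eq: "digit sm i t1 = digit sm i t2"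
  shows "t1 = t2"
proof -
  have "[digit sm i Y + line_shift t1 = digit sm i Y + line_shift t2] (mod sm)"
    using digit_line_block[OF t1 i] digit_line_block[OF t2 i] eq by (simp add: cong_def)
  then have "[line_shift t1 = line_shift t2] (mod sm)" by (simp only: cong_add_lcancel_nat)
  then have "line_shift t1 = line_shift t2"
    using line_shift_le[of t1] line_shift_le[of t2] p_less by (simp add: cong_def)
  then show ?thesis by (rule line_eq_if_shift_eq[OF t1 t2])
qed

lemma line_power_sums_vanish:
  assumes e: "e \<in> vandermonde_array_code n r sm l lam"
    and helpers: "\<forall>j\<in>R. (\<Sum>tau\<in>line u g Y. e j tau) = 0" and t: "t < r"
  shows "(\<Sum>x\<in>({1..n} - R) \<times> line u g Y. point x ^ t * case_prod e x) = 0"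
proof -
  define L where "L = line u g Y"
  define f where "f i tau = point (i, tau) ^ t * e i tau" for i tau
  have "(\<Sum>i=1..n. f i tau) = 0" if "tau \<in> L" for tau
    using vandermonde_array_code_parity[OF e line_less t] that by (simp add: f_def L_def)
  then have "0 = (\<Sum>tau\<in>L. \<Sum>i=1..n. f i tau)" by simp
  also have "\<dots> = (\<Sum>i=1..n. \<Sum>tau\<in>L. f i tau)" by (rule sum.swap)
  also have "\<dots> = (\<Sum>i\<in>{1..n} - R. \<Sum>tau\<in>L. f i tau) + (\<Sum>j\<in>R. \<Sum>tau\<in>L. f j tau)"
    by (rule sum.subset_diff) (use R in auto)
  also have "(\<Sum>j\<in>R. \<Sum>tau\<in>L. f j tau) = 0"
  proof (rule sum.neutral, rule ballI)
    fix j assume j: "j \<in> R"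
    then have "j \<in> {1..n}" "j \<notin> H" using R by auto
    then have "(\<Sum>tau\<in>L. f j tau) = lam j (digit sm j Y) ^ t * (\<Sum>tau\<in>L. e j tau)"
      by (simp add: f_def L_def sum_distrib_left digit_line_other)
    then show "(\<Sum>tau\<in>L. f j tau) = 0" using helpers j by (simp add: L_def)
  qed
  also have "(\<Sum>i\<in>{1..n} - R. \<Sum>tau\<in>L. f i tau) = (\<Sum>x\<in>({1..n} - R) \<times> L. point x ^ t * case_prod e x)"
    unfolding sum.cartesian_product by (intro sum.cong) (auto simp: f_def)
  finally show ?thesis by (simp add: L_def)
qed

text \<open>Along a line only the block nodes change their digits, each through p + 1 values, so
  the n - d non-helpers see at most (n - d) + p delta = r points.\<close>

lemma card_line_points: "card (point ` (({1..n} - R) \<times> line u g Y)) \<le> r"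
proof -
  define A where "A = {1..n} - R"
  define B where "B = {i\<in>H. blk i = u}"
  define D where "D i = (if i \<in> B then (\<lambda>j. (digit sm i Y + j) mod sm) ` {..p} else {digit sm i Y})" for i
  have finA: "finite A" by (simp add: A_def)
  have "point ` (A \<times> line u g Y) \<subseteq> (\<Union>i\<in>A. lam i ` D i)"
  proof clarify
    fix i tau assume i: "i \<in> A" and tau: "tau \<in> line u g Y"
    then have "i \<in> {1..n}" by (simp add: A_def)
    then have "digit sm i tau \<in> D i"
      using digit_line_block[OF tau] digit_line_other[OF tau] line_shift_le[of tau]
      by (auto simp: D_def B_def)
    then show "point (i, tau) \<in> (\<Union>i\<in>A. lam i ` D i)" using i by auto
  qed
  then have "card (point ` (A \<times> line u g Y)) \<le> card (\<Union>i\<in>A. lam i ` D i)"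
    by (rule card_mono[rotated]) (simp add: finA D_def)
  also have "\<dots> \<le> (\<Sum>i\<in>A. card (lam i ` D i))" by (rule card_UN_le[OF finA])
  also have "\<dots> \<le> (\<Sum>i\<in>A. 1 + (if i \<in> B then p else 0))"
  proof (rule sum_mono)
    fix i
    have "card (lam i ` D i) \<le> card (D i)" by (rule card_image_le) (simp add: D_def)
    also have "\<dots> \<le> 1 + (if i \<in> B then p else 0)"
      using card_image_le[of "{..p}" "\<lambda>j. (digit sm i Y + j) mod sm"] by (simp add: D_def)
    finally show "card (lam i ` D i) \<le> 1 + (if i \<in> B then p else 0)" .
  qed
  also have "\<dots> = card A + p * card (A \<inter> B)"
    using sum.inter_restrict[OF finA, of "\<lambda>_. p" B] by (simp only: sum.distrib) (simp add: mult.commute)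
  also have "\<dots> \<le> (n - d) + p * \<delta>"
  proof -
    have "R \<subseteq> {1..n}" using R by auto
    then have "card A = n - d" using card_R by (simp add: A_def card_Diff_subset finite_subset)
    moreover have "card (A \<inter> B) \<le> card B"
      using H by (intro card_mono) (auto simp: B_def finite_subset)
    ultimately show ?thesis using card_block by (simp add: B_def le_trans)
  qed
  also have "\<dots> = r" using dk r kd dn by simp
  finally show ?thesis by (simp add: A_def)
qed

lemma line_block_zero:
  assumes e: "e \<in> vandermonde_array_code n r sm l lam"
    and helpers: "\<forall>j\<in>R. (\<Sum>tau\<in>line u g Y. e j tau) = 0"
    and i: "i \<in> H" "blk i = u" and tau: "tau \<in> line u g Y"
  shows "e i tau = 0"
proof -
  define X where "X = ({1..n} - R) \<times> line u g Y"
  have iX: "(i, tau) \<in> X" and i_n: "i \<in> {1..n}" using i tau H R by (auto simp: X_def)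
  have "x = (i, tau)" if "x \<in> X" "point x = point (i, tau)" for x
  proof -
    obtain i' tau' where x: "x = (i', tau')" by (cases x)
    then have "i' \<in> {1..n}" "tau' \<in> line u g Y" using that(1) by (auto simp: X_def)
    then have "i' = i \<and> digit sm i' tau' = digit sm i tau"
      using digit_point_eqD[OF lam_inj sm_pos \<open>i' \<in> {1..n}\<close> i_n] that(2) x by simp
    then show ?thesis using line_eq_if_block_digit_eq[OF \<open>tau' \<in> line u g Y\<close> tau i_n i] x by auto
  qed
  then show ?thesis
    using power_sums_vanish_imp_zero_at_isolated[of X point r "case_prod e" "(i, tau)"]
      line_power_sums_vanish[OF e helpers] card_line_points iX
    by (simp add: X_def finite_line)
qed

lemma line_sum_other_zero:
  assumes e: "e \<in> vandermonde_array_code n r sm l lam"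
    and helpers: "\<forall>j\<in>R. (\<Sum>tau\<in>line u g Y. e j tau) = 0"
    and i: "i \<in> H" "blk i \<noteq> u"
  shows "(\<Sum>tau\<in>line u g Y. e i tau) = 0"
proof -
  define X where "X = ({1..n} - R) \<times> line u g Y"
  have i_n: "i \<in> {1..n}" "i \<notin> R" using i H R by auto
  have "{x\<in>X. point x = lam i (digit sm i Y)} = {i} \<times> line u g Y"
  proof safe
    fix i' tau' assume "(i', tau') \<in> X" "point (i', tau') = lam i (digit sm i Y)"
    then have "i' \<in> {1..n}" "lam i' (digit sm i' tau') = lam i (digit sm i Y)"
      by (auto simp: X_def)
    then show "i' = i" using digit_point_eqD[OF lam_inj sm_pos _ i_n(1)] by blast
  next
    fix tau assume "tau \<in> line u g Y"
    then show "(i, tau) \<in> X" and "point (i, tau) = lam i (digit sm i Y)"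
      using i_n digit_line_other[of tau u g Y i] i by (auto simp: X_def)
  qed (auto simp: X_def)
  then have "(\<Sum>x\<in>{i} \<times> line u g Y. case_prod e x) = 0"
    using power_sums_vanish_imp_fibre_sums_zero[of X point r "case_prod e" "lam i (digit sm i Y)"]
      line_power_sums_vanish[OF e helpers] card_line_points
    by (simp add: X_def finite_line)
  then show ?thesis by (simp add: sum.cartesian_product[symmetric])
qed

lemma line_through_low_position:
  assumes i: "i \<in> H" and tau: "tau < l" and low: "tau div sm ^ n mod P < p"
  shows "\<exists>Y<sm ^ n. tau \<in> line (blk i) (tau div (P * sm ^ n)) Y"
proof -
  define \<rho> where "\<rho> = tau div sm ^ n mod P"
  define a where "a j = (if j \<in> H \<and> blk j = blk i
    then (digit sm j tau + (sm - (\<rho> + 1))) mod sm else digit sm j tau)" for j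
  have "\<forall>j\<in>{1..n}. a j < sm" using sm_pos by (auto simp: a_def digit_less)
  then obtain Y where Y: "Y < sm ^ n" "\<forall>j\<in>{1..n}. digit sm j Y = a j"
    using ex_digits[OF sm_pos] by blast
  have shift: "line_shift tau = \<rho> + 1" using low by (simp add: line_shift_def \<rho>_def)
  have "\<rho> + 1 \<le> sm" using low p_less by (simp add: \<rho>_def)
  have block: "digit sm j tau = (digit sm j Y + line_shift tau) mod sm"
    if "j \<in> {1..n}" "j \<in> H" "blk j = blk i" for j
  proof -
    have "(digit sm j Y + line_shift tau) mod sm
        = ((digit sm j tau + (sm - (\<rho> + 1))) mod sm + (\<rho> + 1)) mod sm"
      using Y that by (simp add: a_def shift)
    also have "\<dots> = (digit sm j tau + (sm - (\<rho> + 1)) + (\<rho> + 1)) mod sm"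
      by (rule mod_add_left_eq)
    also have "\<dots> = (digit sm j tau + sm) mod sm" using \<open>\<rho> + 1 \<le> sm\<close> by simp
    also have "\<dots> = digit sm j tau" using digit_less[OF sm_pos] by simp
    finally show ?thesis by simp
  qed
  have "tau \<in> line (blk i) (tau div (P * sm ^ n)) Y"
    unfolding line_def using tau low block Y(2) by (auto simp: a_def)
  with Y(1) show ?thesis by blast
qed

lemma line_through_high_position:
  assumes "tau < l" and "p \<le> tau div sm ^ n mod P"
  shows "tau \<in> line (tau div sm ^ n mod P - p) (tau div (P * sm ^ n)) (tau mod sm ^ n)"
  using assms digit_less[OF sm_pos] by (auto simp: line_def line_shift_def digit_mod_power)

lemma line_index_less:
  shows "tau < l \<Longrightarrow> tau div (P * sm ^ n) < s2" and "tau div sm ^ n mod P - p < q"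
proof -
  show "tau < l \<Longrightarrow> tau div (P * sm ^ n) < s2"
    using l by (intro less_mult_imp_div_less) (simp add: mult.commute mult.left_commute)
  show "tau div sm ^ n mod P - p < q"
    using P q_pos mod_less_divisor[of P "tau div sm ^ n"] by linarith
qed

lemma line_sums_vanish_imp_zero_low:
  assumes e: "e \<in> vandermonde_array_code n r sm l lam"
    and helpers: "\<forall>u<q. \<forall>g<s2. \<forall>Y<sm ^ n. \<forall>j\<in>R. (\<Sum>tau\<in>line u g Y. e j tau) = 0"
    and i: "i \<in> H" and tau: "tau < l" and low: "tau div sm ^ n mod P < p"
  shows "e i tau = 0"
proof -
  obtain Y where Y: "Y < sm ^ n" "tau \<in> line (blk i) (tau div (P * sm ^ n)) Y"
    using line_through_low_position[OF i tau low] by blast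
  have "\<forall>j\<in>R. (\<Sum>tau\<in>line (blk i) (tau div (P * sm ^ n)) Y. e j tau) = 0"
    using helpers blk_less i line_index_less(1)[OF tau] Y(1) by simp
  then show ?thesis using line_block_zero[OF e _ i refl Y(2)] by simp
qed

text \<open>If i is not in block u, then tau is the only position of its line at which e i is not
  already known to vanish, so the line sum of e i gives e i tau.\<close>

lemma line_sums_vanish_imp_zero_high:
  assumes e: "e \<in> vandermonde_array_code n r sm l lam"
    and helpers: "\<forall>u<q. \<forall>g<s2. \<forall>Y<sm ^ n. \<forall>j\<in>R. (\<Sum>tau\<in>line u g Y. e j tau) = 0"
    and i: "i \<in> H" and tau: "tau < l" and high: "p \<le> tau div sm ^ n mod P"
  shows "e i tau = 0"
proof -
  define u where "u = tau div sm ^ n mod P - p"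
  define L where "L = line u (tau div (P * sm ^ n)) (tau mod sm ^ n)"
  have tauL: "tau \<in> L" using line_through_high_position[OF tau high] by (simp add: L_def u_def)
  have hz: "\<forall>j\<in>R. (\<Sum>tau\<in>L. e j tau) = 0"
    using helpers line_index_less(1)[OF tau] line_index_less(2) sm_pos by (simp add: L_def u_def)
  show ?thesis
  proof (cases "blk i = u")
    case True
    then show ?thesis using line_block_zero[OF e _ i] hz tauL by (simp add: L_def)
  next
    case False
    have "e i tau' = 0" if "tau' \<in> L - {tau}" for tau'
    proof -
      have "line_shift tau' \<noteq> line_shift tau"
        using that tauL line_eq_if_shift_eq by (auto simp: L_def)
      then have "tau' div sm ^ n mod P < p" using high by (auto simp: line_shift_def split: if_splits)
      then show ?thesis
        using line_sums_vanish_imp_zero_low[OF e helpers i] line_less that by (auto simp: L_def)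
    qed
    then have "(\<Sum>tau'\<in>L. e i tau') = e i tau"
      using sum.remove[OF finite_line tauL[unfolded L_def], of "e i"] by (simp add: L_def)
    then show ?thesis using line_sum_other_zero[OF e _ i False] hz by (simp add: L_def)
  qed
qed

lemma line_sums_vanish_imp_zero:
  assumes e: "e \<in> vandermonde_array_code n r sm l lam"
    and helpers: "\<forall>u<q. \<forall>g<s2. \<forall>Y<sm ^ n. \<forall>j\<in>R. (\<Sum>tau\<in>line u g Y. e j tau) = 0"
    and i: "i \<in> H"
  shows "e i = 0"
proof -
  have "e i tau = 0" for tau
    using line_sums_vanish_imp_zero_low[OF e helpers i] line_sums_vanish_imp_zero_high[OF e helpers i]
      vandermonde_array_code_vanishes[OF e, of i tau] by (meson not_le)
  then show ?thesis by (simp add: fun_eq_iff)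
qed

text \<open>Index kappa = (u s2 + g) sm^n + Y of the download list refers to the line (u, g, Y).\<close>

definition download :: "(nat \<Rightarrow> 'a) \<Rightarrow> 'a list" where
  "download v = map (\<lambda>\<kappa>. \<Sum>tau\<in>line (\<kappa> div (s2 * sm ^ n)) (\<kappa> div sm ^ n mod s2) (\<kappa> mod sm ^ n). v tau)
     [0..<q * s2 * sm ^ n]"

lemma download_determines:
  assumes c: "c \<in> vandermonde_array_code n r sm l lam" and c': "c' \<in> vandermonde_array_code n r sm l lam"
    and eq: "\<forall>j\<in>R. download (c j) = download (c' j)" and i: "i \<in> H"
  shows "c i = c' i"
proof -
  have "\<forall>u<q. \<forall>g<s2. \<forall>Y<sm ^ n. \<forall>j\<in>R. (\<Sum>tau\<in>line u g Y. (c - c') j tau) = 0"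
  proof (intro allI impI ballI)
    fix u g Y j assume u: "u < q" and g: "g < s2" and Y: "Y < sm ^ n" and j: "j \<in> R"
    define \<kappa> where "\<kappa> = (u * s2 + g) * sm ^ n + Y"
    note index = mixed_radix_index[OF u g Y, folded \<kappa>_def]
    have "download (c j) ! \<kappa> = download (c' j) ! \<kappa>" using eq j by simp
    then show "(\<Sum>tau\<in>line u g Y. (c - c') j tau) = 0"
      using index by (simp add: download_def sum_subtractf)
  qed
  then have "(c - c') i = 0"
    by (rule line_sums_vanish_imp_zero[OF vandermonde_array_code_diff[OF c c'] _ i])
  then show ?thesis by (simp add: fun_eq_iff)
qed

end

lemma ex_balanced_blocks:
  assumes "finite H" and "card H = q * \<delta>" and "0 < \<delta>"
  shows "\<exists>blk. (\<forall>i\<in>H. blk i < q) \<and> (\<forall>u. card {i\<in>H. blk i = u} \<le> \<delta>)"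
proof -
  obtain \<pi> where "bij_betw \<pi> H {0..<card H}" using ex_bij_betw_finite_nat[OF assms(1)] by blast
  then have \<pi>: "bij_betw \<pi> H {0..<q * \<delta>}" using assms(2) by simp
  have "\<pi> i div \<delta> < q" if "i \<in> H" for i
    using bij_betwE[OF \<pi>] that assms(3) by (simp add: less_mult_imp_div_less)
  moreover have "card {i\<in>H. \<pi> i div \<delta> = u} \<le> \<delta>" for u
  proof -
    have "card {i\<in>H. \<pi> i div \<delta> = u} \<le> card {u * \<delta>..<u * \<delta> + \<delta>}"
    proof (rule card_inj_on_le)
      show "inj_on \<pi> {i\<in>H. \<pi> i div \<delta> = u}" using bij_betw_imp_inj_on[OF \<pi>] by (rule inj_on_subset) auto
      show "\<pi> ` {i\<in>H. \<pi> i div \<delta> = u} \<subseteq> {u * \<delta>..<u * \<delta> + \<delta>}"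
      proof (rule image_subsetI)
        fix i assume "i \<in> {i\<in>H. \<pi> i div \<delta> = u}"
        then have "u * \<delta> + \<pi> i mod \<delta> = \<pi> i" using div_mult_mod_eq[of "\<pi> i" \<delta>] by simp
        moreover have "\<pi> i mod \<delta> < \<delta>" using assms(3) by simp
        ultimately show "\<pi> i \<in> {u * \<delta>..<u * \<delta> + \<delta>}" by simp
      qed
    qed simp
    then show ?thesis by simp
  qed
  ultimately show ?thesis by (intro exI[of _ "\<lambda>i. \<pi> i div \<delta>"]) auto
qed

lemma has_optimal_repair_vandermonde_array_code:
  fixes lam :: "nat \<Rightarrow> nat \<Rightarrow> 'a::field"
  assumes sm_pos: "0 < sm" and inj: "inj_on (\<lambda>(i, j). lam i j) ({1..n} \<times> {0..<sm})"
    and r: "r = n - k" and h: "1 \<le> h" and kd: "k \<le> d" and dn: "d \<le> n - h"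
    and sm_ge: "(d - k + gcd h (d - k)) div gcd h (d - k) \<le> sm"
    and s: "(d - k + h) div gcd h (d - k) dvd s" and l: "l = s * sm ^ n"
  shows "has_optimal_repair n k l (vandermonde_array_code n r sm l lam) h d"
proof -
  define \<delta> where "\<delta> = gcd h (d - k)"
  define p where "p = (d - k) div \<delta>"
  define q where "q = h div \<delta>"
  have \<delta>: "0 < \<delta>" using h by (simp add: \<delta>_def)
  have dk: "d - k = p * \<delta>" and hq: "h = q * \<delta>" by (simp_all add: p_def q_def \<delta>_def)
  have "(d - k + \<delta>) div \<delta> \<le> sm" using sm_ge by (simp only: \<delta>_def)
  moreover have "(d - k + \<delta>) div \<delta> = p + 1" using dk \<delta> by simp
  ultimately have "p < sm" by simp
  have "(d - k + h) div \<delta> dvd s" using s by (simp only: \<delta>_def)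
  moreover have "(d - k + h) div \<delta> = p + q" using dk hq \<delta> by (simp flip: distrib_right)
  ultimately obtain s2 where s2: "s = (p + q) * s2" by (auto elim: dvdE)
  have hl: "h * l = (d - k + h) * (q * s2 * sm ^ n)"
    using dk hq by (simp add: l s2 algebra_simps)
  show ?thesis
    unfolding has_optimal_repair_def
  proof (intro conjI allI impI)
    show "(d - k + h) dvd (h * l)" using hl by simp
  next
    fix H R assume HR: "H \<subseteq> {1..n} \<and> card H = h \<and> R \<subseteq> {1..n} - H \<and> card R = d"
    then obtain blk where blk: "\<forall>i\<in>H. blk i < q" "\<forall>u. card {i\<in>H. blk i = u} \<le> \<delta>"
      using ex_balanced_blocks[of H q \<delta>] hq \<delta> finite_subset[of H "{1..n}"] by auto
    interpret repair_setting n k r sm l lam d \<delta> p q "p + q" s2 H R blk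
      by unfold_locales (use sm_pos inj r kd dn dk \<open>p < sm\<close> hq h l s2 HR blk in auto)
    have download_length: "h * l div (d - k + h) = q * s2 * sm ^ n" using hl h by simp
    show "\<exists>f :: nat \<Rightarrow> (nat \<Rightarrow> 'a) \<Rightarrow> 'a list.
        (\<forall>j\<in>R. \<forall>v. length (f j v) = h * l div (d - k + h)) \<and>
        (\<forall>c\<in>vandermonde_array_code n r sm l lam. \<forall>c'\<in>vandermonde_array_code n r sm l lam.
           (\<forall>j\<in>R. f j (c j) = f j (c' j)) \<longrightarrow> (\<forall>i\<in>H. c i = c' i))"
    proof (intro exI[of _ "\<lambda>_. download"] conjI ballI allI impI)
      fix v show "length (download v) = h * l div (d - k + h)"
        using download_length by (simp add: download_def)
    next
      fix c c' i assume "c \<in> vandermonde_array_code n r sm l lam" "c' \<in> vandermonde_array_code n r sm l lam"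
        and "\<forall>j\<in>R. download (c j) = download (c' j)" and "i \<in> H"
      then show "c i = c' i" by (rule download_determines)
    qed
  qed
qed

theorem theorem5:
  fixes n k m :: nat and h d :: "nat \<Rightarrow> nat"
    and lam :: "nat \<Rightarrow> nat \<Rightarrow> 'a::{field,finite}"
  assumes "1 \<le> k" and "k < n" and "1 \<le> m"
    and "\<forall>i\<in>{1..m}. 1 \<le> h i \<and> h i \<le> n - k"
    and "\<forall>i\<in>{1..m}. k \<le> d i \<and> d i \<le> n - h i"
    and "\<forall>i\<in>{1..m}. \<forall>j\<in>{1..m}. i \<le> j \<longrightarrow>
           (d i - k + gcd (h i) (d i - k)) div gcd (h i) (d i - k)
             \<le> (d j - k + gcd (h j) (d j - k)) div gcd (h j) (d j - k)"
    and "sm = (d m - k + gcd (h m) (d m - k)) div gcd (h m) (d m - k)"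
    and "s = Lcm ((\<lambda>i. (d i - k + h i) div gcd (h i) (d i - k)) ` {1..m})"
    and "l = s * sm ^ n"
    and "r = n - k"
    and "sm * n \<le> CARD('a)"
    and "inj_on (\<lambda>(i, j). lam i j) ({1..n} \<times> {0..<sm})"
    and "C4 = {c :: nat \<Rightarrow> nat \<Rightarrow> 'a.
                (\<forall>i tau. (i \<notin> {1..n} \<or> l \<le> tau) \<longrightarrow> c i tau = 0) \<and>
                (\<forall>tau<l. \<forall>t\<in>{1..r}.
                   (\<Sum>i=1..n. lam i (digit sm i tau) ^ (t - 1) * c i tau) = 0)}"
  shows "is_MDS_array_code n k l C4 \<and> (\<forall>i\<in>{1..m}. has_optimal_repair n k l C4 (h i) (d i))"
proof -
  have C4: "C4 = vandermonde_array_code n r sm l lam"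
    using assms(13) by (simp add: vandermonde_array_code_def)
  have m: "m \<in> {1..m}" using assms(3) by simp
  then have "0 < h m" using assms(4) by fastforce
  then have "0 < gcd (h m) (d m - k)" by simp
  then have sm_pos: "0 < sm" using assms(7) by simp
  show ?thesis
    unfolding C4
  proof (intro conjI ballI)
    show "is_MDS_array_code n k l (vandermonde_array_code n r sm l lam)"
      using is_MDS_vandermonde_array_code[OF sm_pos assms(12)] assms(2,10) by simp
  next
    fix i assume i: "i \<in> {1..m}"
    show "has_optimal_repair n k l (vandermonde_array_code n r sm l lam) (h i) (d i)"
    proof (rule has_optimal_repair_vandermonde_array_code[OF sm_pos assms(12,10) _ _ _ _ _ assms(9)])
      show "1 \<le> h i" "k \<le> d i" "d i \<le> n - h i" using assms(4,5) i by auto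
      show "(d i - k + gcd (h i) (d i - k)) div gcd (h i) (d i - k) \<le> sm"
        using assms(6,7) i m by auto
      show "(d i - k + h i) div gcd (h i) (d i - k) dvd s"
        unfolding assms(8) by (rule dvd_Lcm) (use i in auto)
    qed
  qed
qed

end
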